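(* For the ARQ protocol without feedback described in the context, the myopic policy $a_{s,t}=\mathbf{1}\{i_t=0,\ b_t\ge E_{\rm s}+E_{\rm d}\}$ (sample whenever the current packet has not yet been decoded correctly and the battery holds enough energy for both sampling and decoding) maximizes the throughput $\mathcal{T}(\Psi)=\lim_{T\to\infty}\frac1T\mathbb{E}[\sum_{t=1}^T\mathbf{1}_{S_t}]$ over all admissible policies.
   Context: System model. Time is slotted, $t=1,2,\dots$. The channel power gains $|h_t|^2$ are i.i.d. across slots with CDF $F_H$. A transmitter sends packets at fixed rate $R$ and power $p_{\rm tx}$; let $|h_{\rm th}|^2=(2^R-1)/p_{\rm tx}$ and $p_c=1-F_H(|h_{\rm th}|^2)$. Each packet may be transmitted at most $K>1$ times; $k_t\in\{0,\dots,K-1\}$ is the transmission index. The receiver harvests energy $E_{H,t}$ at the start of slot $t$, with $E_{H,t}$ i.i.d. taking values in a finite set of nonnegative integer multiples of an energy quantum $E$. Its battery level evolves as $b_{t+1}=\min\{b_t-E_{c,t}+E_{H,t+1},B_{\max}\}$, $b_1=E_{H,1}$, where $E_{c,t}$ is the energy consumed in slot $t$ and $B_{\max}<\infty$ is a multiple of $E$. Sampling costs $E_{\rm s}$ and decoding costs $E_{\rm d}$ (positive multiples of $E$). In slot $t$ the receiver chooses $a_{s,t}\in\{0,1\}$. If $a_{s,t}=1$ it consumes $E_{\rm s}$, and if $|h_t|^2\ge|h_{\rm th}|^2$ (probability $p_c$, independent of the past) it decodes the packet correctly, consuming an additional $E_{\rm d}$; otherwise nothing further is consumed. The reception state $i_t\in\{0,1\}$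 equals $1$ iff the current packet has already been decoded correctly; $S_t$ denotes the event that a packet is decoded correctly in slot $t$. System state: $\mathbf{s}_t=(b_t,k_t,i_t)$. ARQ without feedback: no acknowledgement is sent; the transmitter starts a new packet every $K$ slots ($k_{t+1}=(k_t+1)\bmod K$, and $i_{t+1}=0$ when $k_{t+1}=0$). Admissible actions: $a_{s,t}=1$ is allowed only if $i_t=0$ and $b_t\ge E_{\rm s}+E_{\rm d}$; otherwise $a_{s,t}=0$. Policies choose actions based on the system state (the limit defining throughput is assumed to exist). *)

theory Defs
  imports "HOL-Probability.Probability"
begin

text \<open>Energies are measured in units of the quantum E (natural numbers).
  System state s = (b, k, i): battery level b, transmission index k,
  reception state i (True iff the current packet is already decoded).
  A policy is a (stationary, deterministic) map from system states to the
  sampling action a_s (True = sample).\<close>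

type_synonym sysstate = "nat \<times> nat \<times> bool"
type_synonym policy = "sysstate \<Rightarrow> bool"

definition admissible :: "nat \<Rightarrow> nat \<Rightarrow> policy \<Rightarrow> bool" where
  "admissible Es Ed \<psi> \<longleftrightarrow>
     (\<forall>b k i. \<psi> (b, k, i) \<longrightarrow> \<not> i \<and> Es + Ed \<le> b)"

definition myopic :: "nat \<Rightarrow> nat \<Rightarrow> policy" where
  "myopic Es Ed = (\<lambda>(b, k, i). \<not> i \<and> Es + Ed \<le> b)"

text \<open>One slot: given the state s_t, the policy's action, the channel outcome
  (success with probability pc, independent of the past) and the harvest
  E_{H,t+1} (distributed as H, independent), returns the indicator of S_t and
  the next state s_{t+1}.\<close>

definition slot_step ::
  "nat \<Rightarrow> nat \<Rightarrow> nat \<Rightarrow> nat \<Rightarrow> real \<Rightarrow> nat pmf \<Rightarrow> policy \<Rightarrow> sysstate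
     \<Rightarrow> (bool \<times> sysstate) pmf" where
  "slot_step K Bmax Es Ed pc H \<psi> s =
     (case s of (b, k, i) \<Rightarrow>
       do { ch \<leftarrow> bernoulli_pmf pc;
            eh \<leftarrow> H;
            let a = \<psi> (b, k, i);
            let succ = (a \<and> ch);
            let Ec = (if a then Es + (if ch then Ed else 0) else 0);
            let b' = min (b - Ec + eh) Bmax;
            let k' = (Suc k) mod K;
            let i' = (if k' = 0 then False else (i \<or> succ));
            return_pmf (succ, (b', k', i')) })"

text \<open>Joint distribution of (number of correct decodings in slots 1..T, s_{T+1}).
  Initially b_1 = E_{H,1}, k_1 = 0, i_1 = 0.\<close>

fun run ::
  "nat \<Rightarrow> nat \<Rightarrow> nat \<Rightarrow> nat \<Rightarrow> real \<Rightarrow> nat pmf \<Rightarrow> policy \<Rightarrow> nat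
     \<Rightarrow> (nat \<times> sysstate) pmf" where
  "run K Bmax Es Ed pc H \<psi> 0 = map_pmf (\<lambda>e. (0, (e, 0, False))) H"
| "run K Bmax Es Ed pc H \<psi> (Suc T) =
     do { (n, s) \<leftarrow> run K Bmax Es Ed pc H \<psi> T;
          (succ, s') \<leftarrow> slot_step K Bmax Es Ed pc H \<psi> s;
          return_pmf (n + (if succ then 1 else 0), s') }"

definition avg_throughput ::
  "nat \<Rightarrow> nat \<Rightarrow> nat \<Rightarrow> nat \<Rightarrow> real \<Rightarrow> nat pmf \<Rightarrow> policy \<Rightarrow> nat \<Rightarrow> real" where
  "avg_throughput K Bmax Es Ed pc H \<psi> T =
     measure_pmf.expectation (run K Bmax Es Ed pc H \<psi> T) (\<lambda>(n, s). real n) / real T"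

definition throughput ::
  "nat \<Rightarrow> nat \<Rightarrow> nat \<Rightarrow> nat \<Rightarrow> real \<Rightarrow> nat pmf \<Rightarrow> policy \<Rightarrow> real" where
  "throughput K Bmax Es Ed pc H \<psi> = lim (avg_throughput K Bmax Es Ed pc H \<psi>)"

end

theory Submission
  imports Defs
begin

text \<open>Finite-horizon dynamic programming. The expected number of decodings in T slots is the
  T-fold Bellman operator of the policy applied to 0. The myopic value functions are nondecreasing
  in the battery, value an undecoded packet at least as much as a decoded one, and satisfy an
  exchange inequality saying that spending the sampling (and decoding) energy now is never worse
  than idling; the myopic Bellman operator preserves these three properties. Against such a value
  function the myopic action is greedy among admissible actions, so at every horizon the myopic
  policy collects at least as many expected decodings, and the limits compare.\<close>

text \<open>The library lemma \<open>integral_bind\<close> needs a global bound on the integrand; truncating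
  it outside the (finite) support provides one.\<close>

lemma integral_bind_pmf_finite:
  fixes f :: "'b \<Rightarrow> real"
  assumes fin: "finite (set_pmf (bind_pmf M N))"
  shows "measure_pmf.expectation (bind_pmf M N) f
       = measure_pmf.expectation M (\<lambda>x. measure_pmf.expectation (N x) f)"
proof -
  define S where "S = set_pmf (bind_pmf M N)"
  define g where "g y = (if y \<in> S then f y else 0)" for y
  have g_bounded: "\<bar>g y\<bar> \<le> Max (insert 0 (abs ` f ` S))" for y
    using fin by (auto simp: g_def S_def)
  have "measure_pmf.expectation (bind_pmf M N) f = measure_pmf.expectation (bind_pmf M N) g"
    by (intro integral_cong_AE) (auto simp: g_def S_def AE_measure_pmf_iff)
  also have "\<dots> = measure_pmf.expectation M (\<lambda>x. measure_pmf.expectation (N x) g)"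
    unfolding measure_pmf_bind
    by (rule integral_bind[where K="count_space UNIV" and B'=1, OF _ g_bounded])
       (auto intro: measurable_measure_pmf measure_pmf_in_subprob_algebra
             prob_space.finite_measure prob_space_measure_pmf simp: measure_pmf.emeasure_space_1)
  also have "\<dots> = measure_pmf.expectation M (\<lambda>x. measure_pmf.expectation (N x) f)"
    by (intro integral_cong_AE) (auto simp: g_def S_def AE_measure_pmf_iff intro!: integral_cong_AE)
  finally show ?thesis .
qed

lemma finite_set_pmf_slot_step:
  "finite (set_pmf H) \<Longrightarrow> finite (set_pmf (slot_step K Bm Es Ed pc H \<psi> s))"
  by (auto simp: slot_step_def Let_def split: prod.splits)

lemma finite_set_pmf_run:
  "finite (set_pmf H) \<Longrightarrow> finite (set_pmf (run K Bm Es Ed pc H \<psi> T))"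
  by (induction T) (auto simp: finite_set_pmf_slot_step split: prod.splits)

definition bellman ::
  "nat \<Rightarrow> nat \<Rightarrow> nat \<Rightarrow> nat \<Rightarrow> real \<Rightarrow> nat pmf \<Rightarrow> policy \<Rightarrow> (sysstate \<Rightarrow> real) \<Rightarrow> sysstate \<Rightarrow> real" where
  "bellman K Bm Es Ed pc H \<psi> f s =
     measure_pmf.expectation (slot_step K Bm Es Ed pc H \<psi> s) (\<lambda>(succ, s'). of_bool succ + f s')"

text \<open>Expected value of \<open>f\<close> at the next state when the battery holds \<open>b\<close> after this slot's
  consumption and \<open>i\<close> is the decoded flag before the possible start of a new packet.\<close>

definition continuation ::
  "nat \<Rightarrow> nat \<Rightarrow> nat pmf \<Rightarrow> (sysstate \<Rightarrow> real) \<Rightarrow> nat \<Rightarrow> nat \<Rightarrow> bool \<Rightarrow> real" where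
  "continuation K Bm H f b k i =
     measure_pmf.expectation H (\<lambda>e. f (min (b + e) Bm, Suc k mod K, Suc k mod K \<noteq> 0 \<and> i))"

lemma bellman_eq:
  assumes "0 \<le> pc" "pc \<le> 1" "finite (set_pmf H)"
  shows "bellman K Bm Es Ed pc H \<psi> f (b, k, i) =
    (if \<psi> (b, k, i)
     then pc * (1 + continuation K Bm H f (b - (Es + Ed)) k True)
          + (1 - pc) * continuation K Bm H f (b - Es) k i
     else continuation K Bm H f b k i)"
proof -
  let ?a = "\<psi> (b, k, i)" and ?k' = "Suc k mod K"
  have slot: "slot_step K Bm Es Ed pc H \<psi> (b, k, i) = bernoulli_pmf pc \<bind> (\<lambda>ch. map_pmf (\<lambda>e.
      (?a \<and> ch, min (b - (if ?a then Es + (if ch then Ed else 0) else 0) + e) Bm, ?k',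
       if ?k' = 0 then False else i \<or> ?a \<and> ch)) H)"
    by (simp add: slot_step_def Let_def map_pmf_def)
  show ?thesis
    using assms finite_set_pmf_slot_step[OF assms(3), of K Bm Es Ed pc \<psi> "(b, k, i)"]
    unfolding bellman_def slot
    by (simp add: integral_bind_pmf_finite continuation_def integrable_measure_pmf_finite
        integral_add algebra_simps)
qed

lemma expectation_run:
  assumes "finite (set_pmf H)"
  shows "measure_pmf.expectation (run K Bm Es Ed pc H \<psi> T) (\<lambda>(n, s). real n + f s)
       = measure_pmf.expectation H (\<lambda>e. (bellman K Bm Es Ed pc H \<psi> ^^ T) f (e, 0, False))"
proof (induction T arbitrary: f)
  case 0
  show ?case by simp
next
  case (Suc T)
  let ?slot = "slot_step K Bm Es Ed pc H \<psi>" and ?V = "bellman K Bm Es Ed pc H \<psi>"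
  have slot: "measure_pmf.expectation
      (?slot s \<bind> (\<lambda>(succ, s'). return_pmf (n + (if succ then 1 else 0), s')))
      (\<lambda>(n, s). real n + f s) = real n + ?V f s" for n s
    using finite_set_pmf_slot_step[OF assms]
    by (simp add: map_pmf_def[symmetric] bellman_def case_prod_unfold integral_add
        integrable_measure_pmf_finite flip: of_bool_def)
  have "measure_pmf.expectation (run K Bm Es Ed pc H \<psi> (Suc T)) (\<lambda>(n, s). real n + f s)
      = measure_pmf.expectation (run K Bm Es Ed pc H \<psi> T) (\<lambda>x. measure_pmf.expectation
          (case x of (n, s) \<Rightarrow> ?slot s \<bind> (\<lambda>(succ, s'). return_pmf (n + (if succ then 1 else 0), s')))
          (\<lambda>(n, s). real n + f s))"
    unfolding run.simps
    by (rule integral_bind_pmf_finite)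
       (use finite_set_pmf_run[OF assms, of K Bm Es Ed pc \<psi> "Suc T"] in simp)
  also have "\<dots> = measure_pmf.expectation (run K Bm Es Ed pc H \<psi> T) (\<lambda>(n, s). real n + ?V f s)"
    by (rule Bochner_Integration.integral_cong) (auto simp: slot)
  also have "\<dots> = measure_pmf.expectation H (\<lambda>e. (?V ^^ Suc T) f (e, 0, False))"
    by (simp add: Suc.IH funpow_Suc_right del: funpow.simps)
  finally show ?case .
qed

corollary avg_throughput_eq_bellman_power:
  assumes "finite (set_pmf H)"
  shows "avg_throughput K Bm Es Ed pc H \<psi> T
       = measure_pmf.expectation H (\<lambda>e. (bellman K Bm Es Ed pc H \<psi> ^^ T) (\<lambda>_. 0) (e, 0, False))
         / real T"
  using expectation_run[OF assms, of K Bm Es Ed pc \<psi> T "\<lambda>_. 0"]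
  by (simp add: avg_throughput_def)

lemma bellman_mono:
  assumes "finite (set_pmf H)" and "\<And>s. f s \<le> g s"
  shows "bellman K Bm Es Ed pc H \<psi> f s \<le> bellman K Bm Es Ed pc H \<psi> g s"
  unfolding bellman_def
  by (rule integral_mono)
     (use assms in \<open>auto intro: integrable_measure_pmf_finite finite_set_pmf_slot_step\<close>)

text \<open>In the last clause \<open>w\<close>, \<open>v\<close>, \<open>u\<close> stand for the battery after idling, after an
  unsuccessful and after a successful sample; \<open>k \<noteq> 0\<close> is the decoded flag after a success,
  which is reset when a new packet starts.\<close>

definition favours_sampling :: "nat \<Rightarrow> nat \<Rightarrow> real \<Rightarrow> (sysstate \<Rightarrow> real) \<Rightarrow> bool" where
  "favours_sampling Es Ed pc f \<longleftrightarrow>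
     (\<forall>x y k i. x \<le> y \<longrightarrow> f (x, k, i) \<le> f (y, k, i))
   \<and> (\<forall>x k i. f (x, k, i) \<le> f (x, k, False))
   \<and> (\<forall>u v w k. u \<le> v \<and> v \<le> w \<and> w \<le> v + Es \<and> v \<le> u + Ed
        \<longrightarrow> f (w, k, False) \<le> pc * (1 + f (u, k, k \<noteq> 0)) + (1 - pc) * f (v, k, False))"

context
  fixes K Bm Es Ed :: nat and pc :: real and H :: "nat pmf"
  assumes pc_nonneg: "0 \<le> pc" and pc_le_1: "pc \<le> 1" and finite_H: "finite (set_pmf H)"
begin

lemma expectation_H_mono:
  "(\<And>e. g e \<le> h e) \<Longrightarrow> measure_pmf.expectation H g \<le> measure_pmf.expectation H (h :: nat \<Rightarrow> real)"
  by (rule integral_mono) (auto intro: integrable_measure_pmf_finite[OF finite_H])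

lemma continuation_mono_battery:
  assumes "favours_sampling Es Ed pc f" and "x \<le> y"
  shows "continuation K Bm H f x k i \<le> continuation K Bm H f y k i"
  using assms unfolding continuation_def favours_sampling_def
  by (intro expectation_H_mono) (simp add: min.mono)

lemma continuation_decoded_le:
  assumes "favours_sampling Es Ed pc f"
  shows "continuation K Bm H f x k True \<le> continuation K Bm H f x k i"
  using assms unfolding continuation_def favours_sampling_def
  by (cases i) (auto intro: expectation_H_mono)

lemma continuation_sampling_pays:
  assumes "favours_sampling Es Ed pc f"
    and "u \<le> v" "v \<le> w" "w \<le> v + Es" "v \<le> u + Ed"
  shows "continuation K Bm H f w k False
       \<le> pc * (1 + continuation K Bm H f u k True) + (1 - pc) * continuation K Bm H f v k False"
proof -
  let ?k' = "Suc k mod K"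
  have "f (min (w + e) Bm, ?k', False)
      \<le> pc * (1 + f (min (u + e) Bm, ?k', ?k' \<noteq> 0)) + (1 - pc) * f (min (v + e) Bm, ?k', False)"
    for e
    using assms unfolding favours_sampling_def by (auto simp: min_def)
  then have "continuation K Bm H f w k False \<le> measure_pmf.expectation H (\<lambda>e.
      pc * (1 + f (min (u + e) Bm, ?k', ?k' \<noteq> 0)) + (1 - pc) * f (min (v + e) Bm, ?k', False))"
    unfolding continuation_def by (intro expectation_H_mono) simp
  then show ?thesis
    by (simp add: continuation_def integral_add integrable_measure_pmf_finite[OF finite_H]
        algebra_simps)
qed

lemma bellman_myopic_eq:
  "bellman K Bm Es Ed pc H (myopic Es Ed) f (b, k, i) =
    (if \<not> i \<and> Es + Ed \<le> b
     then pc * (1 + continuation K Bm H f (b - (Es + Ed)) k True)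
          + (1 - pc) * continuation K Bm H f (b - Es) k False
     else continuation K Bm H f b k i)"
  by (simp add: bellman_eq[OF pc_nonneg pc_le_1 finite_H] myopic_def)

lemma continuation_le_bellman_myopic:
  assumes "favours_sampling Es Ed pc f"
  shows "continuation K Bm H f b k i \<le> bellman K Bm Es Ed pc H (myopic Es Ed) f (b, k, i)"
  using continuation_sampling_pays[OF assms, of "b - (Es + Ed)" "b - Es" b k]
  by (auto simp: bellman_myopic_eq)

lemma favours_sampling_bellman_myopic:
  assumes f: "favours_sampling Es Ed pc f"
  shows "favours_sampling Es Ed pc (bellman K Bm Es Ed pc H (myopic Es Ed) f)"
proof -
  define g where "g = bellman K Bm Es Ed pc H (myopic Es Ed) f"
  define c where "c = continuation K Bm H f"
  note g_eq = bellman_myopic_eq[of f, folded g_def c_def]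
  note c_le_g = continuation_le_bellman_myopic[OF f, folded g_def c_def]
  note c_mono = continuation_mono_battery[OF f, folded c_def]
  note c_decoded = continuation_decoded_le[OF f, folded c_def]
  note c_pays = continuation_sampling_pays[OF f, folded c_def]
  have mono: "g (x, k, i) \<le> g (y, k, i)" if "x \<le> y" for x y k i
  proof (cases "\<not> i \<and> Es + Ed \<le> x")
    case True
    with that show ?thesis
      using c_mono[of "x - (Es + Ed)" "y - (Es + Ed)"] c_mono[of "x - Es" "y - Es"] pc_nonneg pc_le_1
      by (simp add: g_eq) (intro add_mono mult_left_mono; simp)
  next
    case False
    then have "g (x, k, i) = c x k i" by (simp only: g_eq if_False)
    also have "\<dots> \<le> c y k i" using c_mono that .
    also have "\<dots> \<le> g (y, k, i)" by (rule c_le_g)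
    finally show ?thesis .
  qed
  have undecoded: "g (x, k, i) \<le> g (x, k, False)" for x k i
    using c_decoded[of x k False] c_le_g[of x k False] by (cases i) (simp_all add: g_eq)
  have pays: "g (w, k, False) \<le> pc * (1 + g (u, k, k \<noteq> 0)) + (1 - pc) * g (v, k, False)"
    if "u \<le> v" "v \<le> w" "w \<le> v + Es" "v \<le> u + Ed" for u v w k
  proof -
    have "g (w, k, False) \<le> pc * (1 + c u k True) + (1 - pc) * c v k False"
    proof (cases "Es + Ed \<le> w")
      case True
      with that show ?thesis
        using c_mono[of "w - (Es + Ed)" u] c_mono[of "w - Es" v] pc_nonneg pc_le_1
        by (simp add: g_eq) (intro add_mono mult_left_mono; simp)
    next
      case False
      then show ?thesis using c_pays[OF that] by (simp add: g_eq)
    qed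
    also have "\<dots> \<le> pc * (1 + g (u, k, k \<noteq> 0)) + (1 - pc) * g (v, k, False)"
      using order.trans[OF c_decoded c_le_g] c_le_g pc_nonneg pc_le_1
      by (intro add_mono mult_left_mono) simp_all
    finally show ?thesis .
  qed
  show ?thesis
    unfolding favours_sampling_def g_def[symmetric] using mono undecoded pays by blast
qed

lemma bellman_le_bellman_myopic:
  assumes "admissible Es Ed \<psi>" and "favours_sampling Es Ed pc f"
  shows "bellman K Bm Es Ed pc H \<psi> f s \<le> bellman K Bm Es Ed pc H (myopic Es Ed) f s"
proof -
  obtain b k i where s: "s = (b, k, i)" by (cases s)
  show ?thesis
  proof (cases "\<psi> s")
    case True
    with assms(1) have "myopic Es Ed s" by (auto simp: admissible_def myopic_def s)
    with True show ?thesis by (simp add: s bellman_eq[OF pc_nonneg pc_le_1 finite_H])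
  next
    case False
    then show ?thesis
      using continuation_le_bellman_myopic[OF assms(2)]
      by (simp add: s bellman_eq[OF pc_nonneg pc_le_1 finite_H])
  qed
qed

lemma favours_sampling_myopic_value:
  "favours_sampling Es Ed pc ((bellman K Bm Es Ed pc H (myopic Es Ed) ^^ T) (\<lambda>_. 0))"
proof (induction T)
  case 0
  show ?case by (simp add: favours_sampling_def pc_nonneg)
next
  case (Suc T)
  then show ?case by (simp add: favours_sampling_bellman_myopic)
qed

lemma bellman_power_le_myopic:
  assumes "admissible Es Ed \<psi>"
  shows "(bellman K Bm Es Ed pc H \<psi> ^^ T) (\<lambda>_. 0) s
       \<le> (bellman K Bm Es Ed pc H (myopic Es Ed) ^^ T) (\<lambda>_. 0) s"
proof (induction T arbitrary: s)
  case (Suc T)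
  let ?V = "bellman K Bm Es Ed pc H \<psi>" and ?M = "bellman K Bm Es Ed pc H (myopic Es Ed)"
  have "?V ((?V ^^ T) (\<lambda>_. 0)) s \<le> ?V ((?M ^^ T) (\<lambda>_. 0)) s"
    by (rule bellman_mono[OF finite_H Suc.IH])
  also have "\<dots> \<le> ?M ((?M ^^ T) (\<lambda>_. 0)) s"
    by (rule bellman_le_bellman_myopic[OF assms favours_sampling_myopic_value])
  finally show ?case by simp
qed simp

lemma avg_throughput_le_myopic:
  assumes "admissible Es Ed \<psi>"
  shows "avg_throughput K Bm Es Ed pc H \<psi> T \<le> avg_throughput K Bm Es Ed pc H (myopic Es Ed) T"
  unfolding avg_throughput_eq_bellman_power[OF finite_H]
  by (intro divide_right_mono expectation_H_mono bellman_power_le_myopic assms) simp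

end

theorem proposition1:
  fixes K Bmax Es Ed :: nat and pc :: real and H :: "nat pmf" and \<psi> :: policy
  assumes "K > 1"
    and "Es > 0" and "Ed > 0"
    and "0 \<le> pc" and "pc \<le> 1"
    and "finite (set_pmf H)"
    and "admissible Es Ed \<psi>"
    and "convergent (avg_throughput K Bmax Es Ed pc H \<psi>)"
    and "convergent (avg_throughput K Bmax Es Ed pc H (myopic Es Ed))"
  shows "throughput K Bmax Es Ed pc H \<psi> \<le> throughput K Bmax Es Ed pc H (myopic Es Ed)"
proof -
  have "avg_throughput K Bmax Es Ed pc H \<psi> \<longlonglongrightarrow> throughput K Bmax Es Ed pc H \<psi>"
    and "avg_throughput K Bmax Es Ed pc H (myopic Es Ed)
         \<longlonglongrightarrow> throughput K Bmax Es Ed pc H (myopic Es Ed)"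
    using assms(8,9) by (simp_all add: throughput_def convergent_LIMSEQ_iff)
  then show ?thesis
    by (rule LIMSEQ_le) (use avg_throughput_le_myopic[OF assms(4-7)] in blast)
qed

end
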